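(* For every integer $n\ge1$, $$\sup_{0\ne f\in\mathcal{T}_n}\frac{|f(0)|}{\|f\|_{L_2[0,1]}} \ge n.$$
   Context: For an integer $n\ge1$, $\mathcal{T}_n$ denotes the set of all functions $f:\mathbb{R}\to\mathbb{C}$ of the form $f(t)=\sum_{j=1}^n a_j e^{i\lambda_j t}$ with $a_j\in\mathbb{C}$ (possibly zero) and real exponents $\lambda_1<\lambda_2<\cdots<\lambda_n$. $\|f\|_{L_2[0,1]}=(\int_0^1|f|^2)^{1/2}$. *)

theory Defs
  imports "HOL-Analysis.Analysis"
begin

text \<open>The class T_n of exponential sums with at most n terms and real frequencies
  lam_1 < ... < lam_n (coefficients may be zero).\<close>
definition exp_sums :: "nat \<Rightarrow> (real \<Rightarrow> complex) set" where
  "exp_sums n = {f. \<exists>(a::nat \<Rightarrow> complex) (lam::nat \<Rightarrow> real).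
      strict_mono_on {..<n} lam \<and>
      f = (\<lambda>t. \<Sum>j<n. a j * exp (\<i> * complex_of_real (lam j * t)))}"

definition L2_01 :: "(real \<Rightarrow> complex) \<Rightarrow> real" where
  "L2_01 f = sqrt (integral {0..1} (\<lambda>t. (cmod (f t))^2))"

end

theory Submission
  imports Defs "HOL-Computational_Algebra.Polynomial" "HOL-Probability.Characteristic_Functions"
begin

text \<open>The polynomial \<open>P(t) = \<Sum>\<^sub>j\<^sub><\<^sub>n c\<^sub>j t\<^sup>j\<close> with
  \<open>c\<^sub>j = (-1)\<^sup>j n C(n,j+1) C(n+j,n)\<close> is the reproducing kernel at 0 for polynomials of
  degree \<open>< n\<close> in \<open>L\<^sub>2[0,1]\<close>: its moments are \<open>\<integral>\<^sub>0\<^sup>1 P(t) t\<^sup>m dt = \<delta>\<^sub>m\<^sub>0\<close> for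
  \<open>m < n\<close>, an identity that reduces to the vanishing of the \<open>n\<close>-th finite difference of a
  polynomial of degree \<open>< n\<close>. Hence \<open>P(0) = \<parallel>P\<parallel>\<^sup>2 = n\<^sup>2\<close> and \<open>|P(0)|/\<parallel>P\<parallel> = n\<close>.
  Substituting \<open>(e\<^sup>i\<^sup>\<epsilon>\<^sup>t - 1)/(i\<epsilon>)\<close> for \<open>t\<close> turns \<open>P\<close> into an exponential sum with the
  \<open>n\<close> frequencies \<open>0, \<epsilon>, \<dots>, (n-1)\<epsilon>\<close>, which converges to \<open>P\<close> uniformly on \<open>[0,1]\<close> as
  \<open>\<epsilon> \<rightarrow> 0\<close>; so the ratio for these sums tends to \<open>n\<close>.\<close>

lemma alternating_binomial_sum_poly_eq_0:
  fixes p :: "'a::idom poly"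
  assumes "degree p < n"
  shows "(\<Sum>k\<le>n. (-1)^k * of_nat (n choose k) * poly p (of_nat k)) = 0"
  using assms
proof (induction n arbitrary: p)
  case 0
  then show ?case by simp
next
  case (Suc m)
  obtain c q where p: "p = pCons c q"
    by (cases p) auto
  have shift: "(\<Sum>k\<le>Suc m. (-1)^k * of_nat (Suc m choose k) * of_nat k * poly q (of_nat k))
      = - of_nat (Suc m) * (\<Sum>k\<le>m. (-1)^k * of_nat (m choose k) * poly (pcompose q [:1, 1:]) (of_nat k))"
  proof -
    have absorb: "of_nat (Suc m choose Suc k) * of_nat (Suc k) = (of_nat (Suc m) * of_nat (m choose k) :: 'a)" for k
      by (metis Suc_times_binomial mult.commute of_nat_mult)
    have "(\<Sum>k\<le>Suc m. (-1)^k * of_nat (Suc m choose k) * of_nat k * poly q (of_nat k))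
        = (\<Sum>k\<le>m. (-1)^Suc k * (of_nat (Suc m choose Suc k) * of_nat (Suc k)) * poly q (of_nat (Suc k)))"
      by (subst sum.atMost_Suc_shift) (simp add: mult.assoc)
    then show ?thesis
      by (simp only: absorb) (simp add: sum_distrib_left poly_pcompose algebra_simps)
  qed
  have IH: "(\<Sum>k\<le>m. (-1)^k * of_nat (m choose k) * poly (pcompose q [:1, 1:]) (of_nat k)) = 0"
  proof (cases "q = 0")
    case False
    with Suc.prems p show ?thesis
      by (intro Suc.IH) (simp add: degree_pcompose)
  qed simp
  have "(\<Sum>k\<le>Suc m. (-1)^k * of_nat (Suc m choose k) * poly p (of_nat k))
      = c * (\<Sum>k\<le>Suc m. (-1)^k * of_nat (Suc m choose k))
        + (\<Sum>k\<le>Suc m. (-1)^k * of_nat (Suc m choose k) * of_nat k * poly q (of_nat k))"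
    by (simp add: p sum_distrib_left sum.distrib[symmetric] algebra_simps del: sum.atMost_Suc)
  also have "\<dots> = 0"
    by (simp only: shift IH choose_alternating_sum[of "Suc m"]) simp
  finally show ?case .
qed

definition kernel_coeff :: "nat \<Rightarrow> nat \<Rightarrow> real" where
  "kernel_coeff n j = (-1)^j * real n * real (n choose Suc j) * real ((n + j) choose n)"

lemma kernel_coeff_moment:
  assumes "m < n"
  shows "(\<Sum>j<n. kernel_coeff n j / (real j + real m + 1)) = (if m = 0 then 1 else 0)"
proof -
  define q :: "real poly" where "q = smult (1 / fact n) (\<Prod>i\<in>{..<n} - {m}. [:real i, 1:])"
  have "degree q \<le> card ({..<n} - {m})"
    unfolding q_def using degree_prod_sum_le[of "{..<n} - {m}" "\<lambda>i. [:real i, 1:]"] by simp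
  also have "\<dots> < n"
    using assms by simp
  finally have deg: "degree q < n" .
  \<comment> \<open>\<open>C(n+j,n) = (j+m+1) q(j+1)\<close>, so the moment is a finite difference of \<open>q\<close>.\<close>
  have binom: "real ((n + j) choose n) = (real j + real m + 1) * poly q (real (Suc j))" for j
  proof -
    have "real ((n + j) choose n) = pochhammer (real j + 1) n / fact n"
      by (simp add: binomial_gbinomial gbinomial_pochhammer')
    also have "pochhammer (real j + 1) n = (real j + 1 + real m) * (\<Prod>i\<in>{..<n} - {m}. real j + 1 + real i)"
      using assms by (simp add: pochhammer_prod atLeast0LessThan prod.remove)
    finally show ?thesis
      by (simp add: q_def poly_prod algebra_simps)
  qed
  have summand: "kernel_coeff n j / (real j + real m + 1)
      = - real n * ((-1)^Suc j * real (n choose Suc j) * poly q (real (Suc j)))" for j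
    by (simp add: kernel_coeff_def binom)
  have "(\<Sum>k\<le>n. (-1)^k * real (n choose k) * poly q (real k)) = 0"
    using alternating_binomial_sum_poly_eq_0[OF deg] by simp
  then have "(\<Sum>j<n. kernel_coeff n j / (real j + real m + 1)) = real n * poly q 0"
    by (simp add: sum.atMost_shift summand sum_negf flip: sum_distrib_left)
  also have "\<dots> = (if m = 0 then 1 else 0)"
  proof (cases "m = 0")
    case True
    have "(\<Prod>i\<in>{..<n} - {0}. real i) = fact (n - 1)"
    proof -
      have "{..<n} - {0} = {1..n - 1}"
        using assms by auto
      then show ?thesis
        by (simp add: fact_prod)
    qed
    with True assms show ?thesis
      by (simp add: q_def poly_prod fact_reduce[of n])
  next
    case False
    then show ?thesis
      using assms by (simp add: q_def poly_prod)
  qed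
  finally show ?thesis .
qed

definition kernel_poly :: "nat \<Rightarrow> real \<Rightarrow> real" where
  "kernel_poly n t = (\<Sum>j<n. kernel_coeff n j * t^j)"

lemma has_integral_power_01: "((\<lambda>t::real. t^k) has_integral 1 / (real k + 1)) {0..1}"
proof -
  have "((\<lambda>t. t^Suc k / real (Suc k)) has_real_derivative t^k) (at t within {0..1})" for t
    using DERIV_cdivide[OF DERIV_pow[of "Suc k" t], of "real (Suc k)"]
    by (simp add: has_field_derivative_at_within del: of_nat_Suc)
  then have "((\<lambda>t. t^k) has_integral (1^Suc k / real (Suc k) - 0^Suc k / real (Suc k))) {0..1}"
    by (intro fundamental_theorem_of_calculus)
      (simp_all add: has_real_derivative_iff_has_vector_derivative)
  then show ?thesis
    by (simp add: add.commute)
qed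

lemma kernel_poly_sq_has_integral:
  assumes "n \<ge> 1"
  shows "((\<lambda>t. (kernel_poly n t)^2) has_integral (real n)^2) {0..1}"
proof -
  let ?c = "kernel_coeff n"
  have "((\<lambda>t. \<Sum>i<n. \<Sum>j<n. ?c i * ?c j * t^(j + i)) has_integral
        (\<Sum>i<n. \<Sum>j<n. ?c i * ?c j * (1 / (real (j + i) + 1)))) {0..1}"
    by (intro has_integral_sum has_integral_mult_right has_integral_power_01 finite_lessThan)
  moreover have "(\<Sum>i<n. \<Sum>j<n. ?c i * ?c j * (1 / (real (j + i) + 1)))
      = (\<Sum>i<n. ?c i * (\<Sum>j<n. ?c j / (real j + real i + 1)))"
    by (simp add: sum_distrib_left algebra_simps)
  moreover have "\<dots> = (\<Sum>i<n. if i = 0 then ?c i else 0)"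
    by (intro sum.cong) (simp_all add: kernel_coeff_moment)
  moreover have "\<dots> = ?c 0"
    using assms by simp
  moreover have "(kernel_poly n t)^2 = (\<Sum>i<n. \<Sum>j<n. ?c i * ?c j * t^(j + i))" for t
    by (simp add: kernel_poly_def power2_eq_square sum_product power_add algebra_simps)
  ultimately show ?thesis
    by (simp add: kernel_coeff_def power2_eq_square)
qed

lemma poly_iexp_mem_exp_sums:
  assumes "0 < e" and "degree p < n"
  shows "(\<lambda>t. poly p (iexp (e * t))) \<in> exp_sums n"
proof -
  have "strict_mono_on {..<n} (\<lambda>j. e * real j)"
    using assms(1) by (intro strict_mono_onI) simp
  moreover have "poly p (iexp (e * t)) = (\<Sum>j<n. coeff p j * iexp (e * real j * t))" for t
  proof -
    have "iexp (e * real j * t) = iexp (e * t) ^ j" for j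
      by (simp add: exp_of_nat_mult[symmetric] mult_ac)
    moreover have "poly p x = (\<Sum>j<n. coeff p j * x^j)" for x
      unfolding poly_altdef using assms(2)
      by (intro sum.mono_neutral_left) (auto simp: coeff_eq_0)
    ultimately show ?thesis
      by simp
  qed
  ultimately show ?thesis
    unfolding exp_sums_def by blast
qed

definition iexp_diff_quot :: "real \<Rightarrow> real \<Rightarrow> complex" where
  "iexp_diff_quot e t = (iexp (e * t) - 1) / (\<i> * e)"

lemma iexp_diff_quot_approx:
  assumes "0 < e"
  shows "norm (iexp_diff_quot e t) \<le> \<bar>t\<bar>"
    and "norm (iexp_diff_quot e t - t) \<le> e * t^2 / 2"
proof -
  have norm_ie: "norm (\<i> * complex_of_real e) = e"
    using assms by (simp add: norm_mult)
  have "norm (iexp (e * t) - 1) \<le> e * \<bar>t\<bar>"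
    using iexp_approx1[of "e * t" 0] assms by (simp add: abs_mult)
  then show "norm (iexp_diff_quot e t) \<le> \<bar>t\<bar>"
    using assms by (simp add: iexp_diff_quot_def norm_divide norm_ie divide_le_eq mult.commute)
  have "iexp_diff_quot e t - t = (iexp (e * t) - (1 + \<i> * (e * t))) / (\<i> * e)"
    using assms by (simp add: iexp_diff_quot_def field_simps)
  moreover have "norm (iexp (e * t) - (1 + \<i> * (e * t))) \<le> (e * t)^2 / 2"
    using iexp_approx1[of "e * t" 1] by (simp add: power2_eq_square)
  ultimately show "norm (iexp_diff_quot e t - t) \<le> e * t^2 / 2"
    using assms by (simp add: norm_divide norm_ie divide_le_eq power2_eq_square mult_ac)
qed

lemma norm_sum_powers_diff_le:
  fixes z w :: "'a::real_normed_field"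
  assumes "norm z \<le> 1" and "norm w \<le> 1"
  shows "norm ((\<Sum>k\<in>A. a k * z^k) - (\<Sum>k\<in>A. a k * w^k))
    \<le> (\<Sum>k\<in>A. norm (a k) * real k) * norm (z - w)"
proof -
  have "norm ((\<Sum>k\<in>A. a k * z^k) - (\<Sum>k\<in>A. a k * w^k)) \<le> (\<Sum>k\<in>A. norm (a k * (z^k - w^k)))"
    by (simp add: norm_sum sum_subtractf[symmetric] right_diff_distrib)
  also have "\<dots> \<le> (\<Sum>k\<in>A. norm (a k) * (real k * norm (z - w)))"
    using assms by (auto intro!: sum_mono mult_left_mono norm_power_diff simp: norm_mult)
  also have "\<dots> = (\<Sum>k\<in>A. norm (a k) * real k) * norm (z - w)"
    by (simp add: sum_distrib_right mult.assoc)
  finally show ?thesis .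
qed

lemma abs_norm_sq_diff_le:
  fixes z w :: "'a::real_normed_vector"
  shows "\<bar>norm z ^ 2 - norm w ^ 2\<bar> \<le> norm (z - w) * (2 * norm w + norm (z - w))"
proof -
  have "norm z ^ 2 - norm w ^ 2 = (norm z - norm w) * (norm z + norm w)"
    by (simp add: power2_eq_square algebra_simps)
  then have "\<bar>norm z ^ 2 - norm w ^ 2\<bar> = \<bar>norm z - norm w\<bar> * (norm z + norm w)"
    by (simp add: abs_mult)
  also have "\<dots> \<le> norm (z - w) * (2 * norm w + norm (z - w))"
    using norm_triangle_ineq3[of z w] norm_triangle_ineq2[of z w]
    by (intro mult_mono) auto
  finally show ?thesis .
qed

definition kernel_exp_sum :: "nat \<Rightarrow> real \<Rightarrow> real \<Rightarrow> complex" where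
  "kernel_exp_sum n e t = (\<Sum>k<n. kernel_coeff n k * iexp_diff_quot e t ^ k)"

lemma kernel_exp_sum_mem_exp_sums:
  assumes "0 < e" and "n \<ge> 1"
  shows "kernel_exp_sum n e \<in> exp_sums n"
proof -
  define z where "z = \<i> * complex_of_real e"
  define q where "q = (\<Sum>k<n. smult (kernel_coeff n k) ([:-1 / z, 1 / z:] ^ k))"
  have "degree q < n"
    unfolding q_def using assms(2)
    by (intro degree_sum_less) (auto intro: le_less_trans[OF degree_smult_le]
        le_less_trans[OF degree_power_le])
  moreover have "kernel_exp_sum n e = (\<lambda>t. poly q (iexp (e * t)))"
    by (simp add: fun_eq_iff q_def z_def poly_sum kernel_exp_sum_def iexp_diff_quot_def
        diff_divide_distrib)
  ultimately show ?thesis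
    using poly_iexp_mem_exp_sums[OF assms(1)] by simp
qed

lemma kernel_exp_sum_0:
  assumes "n \<ge> 1"
  shows "kernel_exp_sum n e 0 = (real n)^2"
  using assms by (simp add: kernel_exp_sum_def iexp_diff_quot_def kernel_coeff_def zero_power
      power2_eq_square)

lemma kernel_exp_sum_close_kernel_poly:
  assumes "0 < e" and "0 \<le> t" and "t \<le> 1"
  shows "norm (kernel_exp_sum n e t - kernel_poly n t) \<le> e * (\<Sum>k<n. \<bar>kernel_coeff n k\<bar> * real k)"
proof -
  have "norm (kernel_exp_sum n e t - kernel_poly n t)
      \<le> (\<Sum>k<n. \<bar>kernel_coeff n k\<bar> * real k) * norm (iexp_diff_quot e t - t)"
    using norm_sum_powers_diff_le[of "iexp_diff_quot e t" "complex_of_real t"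
        "\<lambda>k. complex_of_real (kernel_coeff n k)" "{..<n}"] iexp_diff_quot_approx(1)[OF assms(1), of t] assms
    by (simp add: kernel_exp_sum_def kernel_poly_def)
  also have "\<dots> \<le> (\<Sum>k<n. \<bar>kernel_coeff n k\<bar> * real k) * e"
  proof (intro mult_left_mono sum_nonneg)
    have "t^2 \<le> 1"
      using assms by (simp add: power_le_one)
    then have "e * t^2 / 2 \<le> e"
      using assms(1) mult_left_mono[of "t^2" 1 e] by linarith
    then show "norm (iexp_diff_quot e t - t) \<le> e"
      using iexp_diff_quot_approx(2)[OF assms(1), of t] by linarith
  qed auto
  finally show ?thesis
    by (simp add: mult.commute)
qed

lemma abs_kernel_poly_le:
  assumes "0 \<le> t" and "t \<le> 1"
  shows "\<bar>kernel_poly n t\<bar> \<le> (\<Sum>k<n. \<bar>kernel_coeff n k\<bar>)"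
  unfolding kernel_poly_def using assms
  by (intro order_trans[OF sum_abs] sum_mono) (simp add: abs_mult power_le_one mult_left_le)

lemma kernel_exp_sum_sq_integral_approx:
  assumes "n \<ge> 1"
  obtains K where "\<And>e. 0 < e \<Longrightarrow> e \<le> 1 \<Longrightarrow>
    \<bar>integral {0..1} (\<lambda>t. norm (kernel_exp_sum n e t) ^ 2) - (real n)^2\<bar> \<le> e * K"
proof
  define M where "M = (\<Sum>k<n. \<bar>kernel_coeff n k\<bar> * real k)"
  define B where "B = (\<Sum>k<n. \<bar>kernel_coeff n k\<bar>)"
  fix e :: real
  assume e: "0 < e" "e \<le> 1"
  let ?F = "kernel_exp_sum n e" and ?P = "kernel_poly n"
  have M: "M \<ge> 0"
    by (simp add: M_def sum_nonneg)
  have pointwise: "norm (norm (?F t) ^ 2 - ?P t ^ 2) \<le> e * (M * (2 * B + M))" if t: "t \<in> cbox 0 1" for t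
  proof -
    have close: "norm (?F t - ?P t) \<le> e * M"
      using kernel_exp_sum_close_kernel_poly[OF e(1)] t by (simp add: M_def)
    have "norm (norm (?F t) ^ 2 - ?P t ^ 2) = \<bar>norm (?F t) ^ 2 - norm (complex_of_real (?P t)) ^ 2\<bar>"
      by simp
    also have "\<dots> \<le> norm (?F t - ?P t) * (2 * \<bar>?P t\<bar> + norm (?F t - ?P t))"
      using abs_norm_sq_diff_le[of "?F t" "complex_of_real (?P t)"] by simp
    also have "\<dots> \<le> (e * M) * (2 * B + M)"
      using close abs_kernel_poly_le[of t n] t e M mult_left_le_one_le[of M e]
      by (intro mult_mono) (auto simp: B_def)
    finally show ?thesis
      by (simp add: mult.assoc)
  qed
  have "continuous_on {0..1} (\<lambda>t. norm (?F t) ^ 2)"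
    using e unfolding kernel_exp_sum_def iexp_diff_quot_def by (intro continuous_intros) auto
  then have "((\<lambda>t. norm (?F t) ^ 2 - ?P t ^ 2) has_integral
      (integral {0..1} (\<lambda>t. norm (?F t) ^ 2) - (real n)^2)) (cbox 0 1)"
    using has_integral_diff[OF integrable_integral kernel_poly_sq_has_integral[OF assms]]
      integrable_continuous_interval by auto
  from has_integral_bound[OF _ this pointwise] e M
  show "\<bar>integral {0..1} (\<lambda>t. norm (?F t) ^ 2) - (real n)^2\<bar> \<le> e * (M * (2 * B + M))"
    by (simp add: B_def sum_nonneg)
qed

lemma kernel_exp_sum_ratio_lower_bound:
  assumes "n \<ge> 1"
  obtains K where "\<forall>\<^sub>F e in at_right 0. kernel_exp_sum n e \<in> exp_sums n - {(\<lambda>_. 0)} \<and>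
    (real n)^2 / sqrt ((real n)^2 + e * K) \<le> cmod (kernel_exp_sum n e 0) / L2_01 (kernel_exp_sum n e)"
proof -
  obtain K where K: "\<And>e. 0 < e \<Longrightarrow> e \<le> 1 \<Longrightarrow>
      \<bar>integral {0..1} (\<lambda>t. norm (kernel_exp_sum n e t) ^ 2) - (real n)^2\<bar> \<le> e * K"
    using kernel_exp_sum_sq_integral_approx[OF assms] by blast
  let ?N = "(real n)^2"
  have "((\<lambda>e. e * K) \<longlongrightarrow> 0 * K) (at_right 0)"
    by (intro tendsto_intros)
  then have "\<forall>\<^sub>F e in at_right 0. e * K < ?N"
    using assms by (intro order_tendstoD) auto
  moreover have "\<forall>\<^sub>F e in at_right (0::real). 0 < e \<and> e \<le> 1"
    by (auto simp: eventually_at_right_field intro: exI[of _ 1])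
  ultimately have "\<forall>\<^sub>F e in at_right 0. kernel_exp_sum n e \<in> exp_sums n - {(\<lambda>_. 0)} \<and>
      ?N / sqrt (?N + e * K) \<le> cmod (kernel_exp_sum n e 0) / L2_01 (kernel_exp_sum n e)"
  proof eventually_elim
    case (elim e)
    let ?F = "kernel_exp_sum n e"
    let ?I = "integral {0..1} (\<lambda>t. norm (?F t) ^ 2)"
    have "0 < ?I" and "?I \<le> ?N + e * K"
      using K[of e] elim by linarith+
    moreover have "cmod (?F 0) = ?N"
      using kernel_exp_sum_0[OF assms] by (simp add: norm_power)
    ultimately have "?N / sqrt (?N + e * K) \<le> cmod (?F 0) / L2_01 ?F"
      by (simp add: L2_01_def frac_le)
    moreover have "?F \<in> exp_sums n - {(\<lambda>_. 0)}"
      using kernel_exp_sum_mem_exp_sums[of e n] kernel_exp_sum_0[OF assms] assms elim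
      by (auto dest: fun_cong[of _ _ 0])
    ultimately show ?case
      by blast
  qed
  then show ?thesis
    by (rule that)
qed

theorem theorem2p6:
  fixes n :: nat
  assumes "n \<ge> 1"
  shows "ereal (real n) \<le>
    (SUP f \<in> exp_sums n - {(\<lambda>_. 0)}. ereal (cmod (f 0) / L2_01 f))"
proof -
  let ?N = "(real n)^2" and ?S = "SUP f \<in> exp_sums n - {(\<lambda>_. 0)}. ereal (cmod (f 0) / L2_01 f)"
  obtain K where K: "\<forall>\<^sub>F e in at_right 0. kernel_exp_sum n e \<in> exp_sums n - {(\<lambda>_. 0)} \<and>
      ?N / sqrt (?N + e * K) \<le> cmod (kernel_exp_sum n e 0) / L2_01 (kernel_exp_sum n e)"
    using kernel_exp_sum_ratio_lower_bound[OF assms] by blast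
  have "((\<lambda>e. ereal (?N / sqrt (?N + e * K))) \<longlongrightarrow> ereal (?N / sqrt (?N + 0 * K))) (at_right 0)"
    by (intro tendsto_intros) (use assms in auto)
  moreover have "\<forall>\<^sub>F e in at_right 0. ereal (?N / sqrt (?N + e * K)) \<le> ?S"
    using K by eventually_elim (auto intro: SUP_upper2)
  ultimately have "ereal (?N / sqrt (?N + 0 * K)) \<le> ?S"
    by (intro tendsto_le[OF trivial_limit_at_right_real tendsto_const])
  then show ?thesis
    using assms by (simp add: power2_eq_square)
qed

end
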